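(* Let $R(x)=\sum_{d=1}^{d_{\max}} R_d x^d$ be a generator degree distribution, fix $r=m/n>0$, and let $l_{\mathrm{avg}} = \frac{n}{m}R'(1)$ and $\lambda(x)=e^{l_{\mathrm{avg}}(x-1)}$. Suppose transmission takes place over the binary erasure channel with erasure probability $\epsilon\in(0,1)$. Then the error floor $P_e$ of the $(\lambda(x),R(x))$ LDGM ensemble satisfies $$P_e \;\ge\; \frac{1}{2}\,\lambda(\epsilon)\Bigl(1+ l_{\mathrm{avg}}\, (1-\epsilon)\Bigl(1-\frac{R'(1-\lambda(\epsilon))}{R'(1)}\Bigr)\Bigr).$$ Consequently, for this lower bound to tend to zero at a fixed erasure probability $\epsilon$, it is necessary that $R'(1)$ tend to infinity.
   Context: The LDGM ensemble with $m$ information bits and $n$ generator nodes is constructed as follows. The information bits $u_1,\dots,u_m$ are i.i.d. uniform in $\{0,1\}$. Each generator node independently chooses a degree $d$ with probability $R_d$ and a uniformly random $d$-subset $\{i_1,\dots,i_d\}$ of the information bits. It outputs $u_{i_1}+\dots+u_{i_d} \pmod 2$, which is sent through a BEC($\epsilon$). The limit $m,n\to\infty$ is taken with $n/m$ fixed. In this limit the information-bit degree distribution is Poisson with node-perspective generating function $\lambda(x)=e^{l_{\mathrm{avg}}(x-1)}$, $l_{\mathrm{avg}}=\frac{n}{m}R'(1)$. The error floor $P_e$ is the asymptotic (as $m\to\infty$) bit error probability of the information bits under belief-propagation (peeling) decoding run until no further progress is possible. Information bits that remain undetermined are guessed uniformly at random. *)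

theory Defs
  imports "HOL-Probability.Probability"
begin

text \<open>Generator degree distribution: a pmf R on degrees with support in {1..dmax};
  R d is the probability R_d. Its generating polynomial and derivative:\<close>

definition Rpoly :: "nat \<Rightarrow> nat pmf \<Rightarrow> real \<Rightarrow> real" where
  "Rpoly dmax R x = (\<Sum>d=1..dmax. pmf R d * x ^ d)"

definition Rder :: "nat \<Rightarrow> nat pmf \<Rightarrow> real \<Rightarrow> real" where
  "Rder dmax R x = (\<Sum>d=1..dmax. real d * pmf R d * x ^ (d - 1))"

text \<open>One generator node with m information bits: degree d drawn from R, a uniformly
  random d-subset of {0..<m} (min d m only matters for m < d, irrelevant asymptotically),
  and an erasure flag (True = erased) drawn as Bernoulli(eps).\<close>

definition ldgm_gen :: "nat pmf \<Rightarrow> real \<Rightarrow> nat \<Rightarrow> (nat set \<times> bool) pmf" where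
  "ldgm_gen R eps m =
     do { d \<leftarrow> R;
          S \<leftarrow> pmf_of_set {S. S \<subseteq> {..<m} \<and> card S = min d m};
          e \<leftarrow> bernoulli_pmf eps;
          return_pmf (S, e) }"

definition ldgm_graph :: "nat pmf \<Rightarrow> real \<Rightarrow> nat \<Rightarrow> nat \<Rightarrow> (nat \<Rightarrow> nat set \<times> bool) pmf" where
  "ldgm_graph R eps m n = Pi_pmf {..<n} ({}, True) (\<lambda>_. ldgm_gen R eps m)"

text \<open>Bits determined by peeling (BP on the BEC) run until no further progress:
  the least set closed under "an unerased generator all of whose neighbours but i are
  known reveals i".\<close>

inductive_set recovered :: "(nat \<Rightarrow> nat set \<times> bool) \<Rightarrow> nat \<Rightarrow> nat set"
  for G :: "nat \<Rightarrow> nat set \<times> bool" and n :: nat where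
  peel: "\<lbrakk> j < n; \<not> snd (G j); i \<in> fst (G j); \<forall>k\<in>fst (G j). k \<noteq> i \<longrightarrow> k \<in> recovered G n \<rbrakk>
         \<Longrightarrow> i \<in> recovered G n"

text \<open>Bit error probability with m information bits and n generators: a bit is in error
  iff it is undetermined and the uniform random guess (fair coin c, True = wrong guess)
  is wrong; averaged over the m information bits.\<close>

definition bit_error_prob :: "nat pmf \<Rightarrow> real \<Rightarrow> nat \<Rightarrow> nat \<Rightarrow> real" where
  "bit_error_prob R eps m n =
     (1 / real m) * (\<Sum>i<m. measure_pmf.prob
        (pair_pmf (ldgm_graph R eps m n) (bernoulli_pmf (1/2)))
        {(G, c). i \<notin> recovered G n \<and> c})"

definition lavg :: "nat \<Rightarrow> nat pmf \<Rightarrow> real \<Rightarrow> real" where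
  "lavg dmax R r = Rder dmax R 1 / r"

definition lam :: "nat \<Rightarrow> nat pmf \<Rightarrow> real \<Rightarrow> real \<Rightarrow> real" where
  "lam dmax R r x = exp (lavg dmax R r * (x - 1))"

definition ldgm_bound :: "nat \<Rightarrow> nat pmf \<Rightarrow> real \<Rightarrow> real \<Rightarrow> real" where
  "ldgm_bound dmax R r eps =
     1/2 * lam dmax R r eps *
       (1 + lavg dmax R r * (1 - eps) *
            (1 - Rder dmax R (1 - lam dmax R r eps) / Rder dmax R 1))"

end

theory Submission
  imports Defs "HOL-Real_Asymp.Real_Asymp"
begin

text \<open>
  A bit i stays undetermined whenever no unerased generator touches it, or exactly one
  unerased generator j touches it and j has a further neighbour k touched by no other
  unerased generator: then peeling never starts on i or k. The indicator of this event is a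
  polynomial in independent per-generator indicators, so its expectation has a closed form
  (inclusion-exclusion over the neighbours of j). As m \<rightarrow> \<infinity> with n/m \<rightarrow> 1/r, the
  probability that a fixed b-set of bits is missed by all generators tends to \<lambda>(\<epsilon>)^b, and
  the expectation tends to \<lambda>(\<epsilon>)(1 + l_avg (1-\<epsilon>)(1 - R'(1-\<lambda>(\<epsilon>))/R'(1))).
  Half of it is a lower bound on the bit error probability because of the random guess.
  Since the bound is at least \<lambda>(\<epsilon>)/2 = exp(-R'(1)(1-\<epsilon>)/r)/2, it can only vanish if
  R'(1) \<rightarrow> \<infinity>.
\<close>

lemma prod_of_bool_eq:
  "finite A \<Longrightarrow> (\<Prod>x\<in>A. of_bool (P x) :: 'a :: comm_semiring_1) = of_bool (\<forall>x\<in>A. P x)"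
  by (induction A rule: finite_induct) auto

lemma prod_one_minus_eq_sum_Pow:
  fixes a :: "'a \<Rightarrow> real"
  assumes "finite K"
  shows "(\<Prod>k\<in>K. 1 - a k) = (\<Sum>X\<in>Pow K. (-1) ^ card X * (\<Prod>k\<in>X. a k))"
proof -
  have "(\<Prod>k\<in>K. 1 - a k) = (\<Prod>k\<in>K. - a k + 1)" by simp
  also have "\<dots> = (\<Sum>X\<in>Pow K. (\<Prod>k\<in>X. - a k) * (\<Prod>k\<in>K - X. 1))"
    by (rule prod_add) (rule assms)
  also have "\<dots> = (\<Sum>X\<in>Pow K. (-1) ^ card X * (\<Prod>k\<in>X. a k))"
    by (intro sum.cong refl) (simp add: prod_uminus)
  finally show ?thesis .
qed

lemma sum_Pow_card:
  assumes "finite K"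
  shows "(\<Sum>X\<in>Pow K. f (card X)) = (\<Sum>l\<le>card K. real (card K choose l) * f l)"
proof -
  have "(\<Sum>X\<in>Pow K. f (card X)) = (\<Sum>l\<le>card K. \<Sum>X\<in>{X\<in>Pow K. card X = l}. f (card X))"
    by (rule sum.group[symmetric]) (use assms in \<open>auto intro: card_mono\<close>)
  also have "\<dots> = (\<Sum>l\<le>card K. real (card K choose l) * f l)"
  proof (intro sum.cong refl)
    fix l
    have "card {X\<in>Pow K. card X = l} = card K choose l"
      using n_subsets[OF assms, of l] by (simp add: Pow_def conj_commute)
    then show "(\<Sum>X\<in>{X\<in>Pow K. card X = l}. f (card X)) = real (card K choose l) * f l"
      by simp
  qed
  finally show ?thesis .
qed

lemma alternating_binomial_sum:
  fixes L :: real
  shows "(\<Sum>l\<le>c. real (c choose l) * (-1) ^ l * L ^ (1 + l)) = L * (1 - L) ^ c"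
proof -
  have summand: "real (c choose l) * (-1) ^ l * L ^ (1 + l) = L * (real (c choose l) * (- L) ^ l * 1 ^ (c - l))"
    for l by (simp add: power_minus[of L])
  have "(1 - L) ^ c = (\<Sum>l\<le>c. real (c choose l) * (- L) ^ l * 1 ^ (c - l))"
    using binomial_ring[of "- L" 1 c] by simp
  then show ?thesis
    by (simp only: summand sum_distrib_left[symmetric])
qed

lemma expectation_pair_pmf_finite:
  fixes h :: "'a \<times> 'b \<Rightarrow> real"
  assumes M: "finite (set_pmf M)" and N: "finite (set_pmf N)"
  shows "measure_pmf.expectation (pair_pmf M N) h =
         measure_pmf.expectation M (\<lambda>x. measure_pmf.expectation N (\<lambda>y. h (x, y)))"
proof -
  have "measure_pmf.expectation (pair_pmf M N) h =
    (\<Sum>a\<in>set_pmf M. pmf M a *\<^sub>R measure_pmf.expectation (N \<bind> (\<lambda>y. return_pmf (a, y))) h)"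
    unfolding pair_pmf_def by (rule pmf_expectation_bind) (use M N in auto)
  also have "\<dots> = (\<Sum>a\<in>set_pmf M. measure_pmf.expectation N (\<lambda>y. h (a, y)) * pmf M a)"
  proof (intro sum.cong refl)
    fix a
    have "measure_pmf.expectation (N \<bind> (\<lambda>y. return_pmf (a, y))) h =
      (\<Sum>b\<in>set_pmf N. pmf N b *\<^sub>R measure_pmf.expectation (return_pmf (a, b)) h)"
      by (rule pmf_expectation_bind) (use N in auto)
    also have "\<dots> = measure_pmf.expectation N (\<lambda>y. h (a, y))"
      by (subst integral_measure_pmf_real[of "set_pmf N"]) (use N in \<open>auto simp: mult_ac\<close>)
    finally show "pmf M a *\<^sub>R measure_pmf.expectation (N \<bind> (\<lambda>y. return_pmf (a, y))) h =
       measure_pmf.expectation N (\<lambda>y. h (a, y)) * pmf M a" by simp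
  qed
  also have "\<dots> = measure_pmf.expectation M (\<lambda>x. measure_pmf.expectation N (\<lambda>y. h (x, y)))"
    by (rule integral_measure_pmf_real[symmetric]) (use M in auto)
  finally show ?thesis .
qed

lemma prob_pair_fair_coin:
  assumes "finite (set_pmf M)"
  shows "measure_pmf.prob (pair_pmf M (bernoulli_pmf (1/2))) {(G, c). P G \<and> c}
         = 1/2 * measure_pmf.expectation M (\<lambda>G. of_bool (P G))"
proof -
  have "measure_pmf.prob (pair_pmf M (bernoulli_pmf (1/2))) {(G, c). P G \<and> c}
     = measure_pmf.expectation (pair_pmf M (bernoulli_pmf (1/2))) (indicator {(G, c). P G \<and> c})"
    by simp
  also have "\<dots> = measure_pmf.expectation M (\<lambda>G. measure_pmf.expectation (bernoulli_pmf (1/2))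
          (\<lambda>c. indicator {(G, c). P G \<and> c} (G, c)))"
    by (rule expectation_pair_pmf_finite[OF assms]) simp
  also have "\<dots> = measure_pmf.expectation M (\<lambda>G. 1/2 * of_bool (P G))"
    by (simp add: indicator_def)
  finally show ?thesis by simp
qed

section \<open>The generator distribution\<close>

definition ksubsets :: "nat \<Rightarrow> nat \<Rightarrow> nat set set" where
  "ksubsets m c = {S. S \<subseteq> {..<m} \<and> card S = c}"

lemma finite_ksubsets: "finite (ksubsets m c)"
  unfolding ksubsets_def by (rule finite_subset[of _ "Pow {..<m}"]) auto

lemma card_ksubsets: "card (ksubsets m c) = m choose c"
  unfolding ksubsets_def using n_subsets[of "{..<m}" c] by simp

lemma ksubsets_nonempty: "c \<le> m \<Longrightarrow> ksubsets m c \<noteq> {}"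
  unfolding ksubsets_def by (auto intro!: exI[of _ "{..<c}"])

lemma card_ksubsets_disjoint:
  assumes "B \<subseteq> {..<m}"
  shows "card {S\<in>ksubsets m c. S \<inter> B = {}} = (m - card B) choose c"
proof -
  have "{S\<in>ksubsets m c. S \<inter> B = {}} = {S. S \<subseteq> {..<m} - B \<and> card S = c}"
    unfolding ksubsets_def by auto
  moreover have "card ({..<m} - B) = m - card B"
    using assms by (simp add: card_Diff_subset finite_subset)
  ultimately show ?thesis using n_subsets[of "{..<m} - B" c] by simp
qed

text \<open>meet_prob m b c is the probability that a uniform c-subset of {..<m} meets a fixed b-set.\<close>

definition meet_prob :: "nat \<Rightarrow> nat \<Rightarrow> nat \<Rightarrow> real" where
  "meet_prob m b c = 1 - real ((m - b) choose c) / real (m choose c)"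

lemma sum_ksubsets_avoiding:
  assumes "B \<subseteq> {..<m}" "c \<le> m"
  shows "(\<Sum>S\<in>ksubsets m c. of_bool (S \<inter> B = {}) :: real) = (1 - meet_prob m (card B) c) * real (m choose c)"
proof -
  have "ksubsets m c \<inter> {S. S \<inter> B = {}} = {S\<in>ksubsets m c. S \<inter> B = {}}" by auto
  then have "(\<Sum>S\<in>ksubsets m c. of_bool (S \<inter> B = {}) :: real) = real ((m - card B) choose c)"
    using card_ksubsets_disjoint[OF assms(1)] by (simp add: finite_ksubsets)
  moreover have "real (m choose c) > 0" using assms(2) by simp
  ultimately show ?thesis by (simp add: meet_prob_def field_simps)
qed

lemma ldgm_gen_eq:
  "ldgm_gen R eps m = R \<bind> (\<lambda>d. pair_pmf (pmf_of_set (ksubsets m (min d m))) (bernoulli_pmf eps))"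
  unfolding ldgm_gen_def ksubsets_def pair_pmf_def ..

lemma set_pmf_ldgm_gen: "y \<in> set_pmf (ldgm_gen R eps m) \<Longrightarrow> fst y \<subseteq> {..<m}"
  using finite_ksubsets ksubsets_nonempty[of "min _ m" m]
  by (auto simp: ldgm_gen_eq set_pmf_of_set ksubsets_def)

lemma finite_set_pmf_ldgm_gen: "finite (set_pmf (ldgm_gen R eps m))"
proof -
  have "set_pmf (ldgm_gen R eps m) \<subseteq> Pow {..<m} \<times> UNIV"
    using set_pmf_ldgm_gen by force
  then show ?thesis by (rule finite_subset) auto
qed

lemma finite_set_pmf_ldgm_graph: "finite (set_pmf (ldgm_graph R eps m n))"
  by (simp add: ldgm_graph_def set_Pi_pmf finite_PiE_dflt finite_set_pmf_ldgm_gen)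

lemma expectation_ldgm_gen:
  fixes f :: "nat set \<times> bool \<Rightarrow> real"
  assumes R: "set_pmf R \<subseteq> {1..dmax}" and eps: "0 \<le> eps" "eps \<le> 1"
  shows "measure_pmf.expectation (ldgm_gen R eps m) f =
     (\<Sum>d=1..dmax. pmf R d * ((\<Sum>S\<in>ksubsets m (min d m). eps * f (S, True) + (1 - eps) * f (S, False))
         / real (m choose min d m)))"
proof -
  let ?node = "\<lambda>d. pair_pmf (pmf_of_set (ksubsets m (min d m))) (bernoulli_pmf eps)"
  have fin: "finite (set_pmf (?node d))" for d
    using finite_ksubsets ksubsets_nonempty[of "min d m" m] by simp
  have "measure_pmf.expectation (ldgm_gen R eps m) f =
     (\<Sum>d=1..dmax. pmf R d *\<^sub>R measure_pmf.expectation (?node d) f)"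
    unfolding ldgm_gen_eq by (rule pmf_expectation_bind) (use R fin in auto)
  also have "\<dots> = (\<Sum>d=1..dmax. pmf R d * ((\<Sum>S\<in>ksubsets m (min d m). eps * f (S, True) + (1 - eps) * f (S, False))
         / real (m choose min d m)))"
  proof (intro sum.cong refl)
    fix d
    have "measure_pmf.expectation (?node d) f = measure_pmf.expectation (pmf_of_set (ksubsets m (min d m)))
            (\<lambda>S. measure_pmf.expectation (bernoulli_pmf eps) (\<lambda>e. f (S, e)))"
      by (rule expectation_pair_pmf_finite) (use finite_ksubsets ksubsets_nonempty[of "min d m" m] in simp_all)
    also have "\<dots> = (\<Sum>S\<in>ksubsets m (min d m). eps * f (S, True) + (1 - eps) * f (S, False))
         / real (m choose min d m)"
      using finite_ksubsets ksubsets_nonempty[of "min d m" m] eps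
      by (simp add: integral_pmf_of_set card_ksubsets mult_ac)
    finally show "pmf R d *\<^sub>R measure_pmf.expectation (?node d) f = pmf R d * ((\<Sum>S\<in>ksubsets m (min d m).
         eps * f (S, True) + (1 - eps) * f (S, False)) / real (m choose min d m))"
      by simp
  qed
  finally show ?thesis .
qed

section \<open>Certificates that a bit stays undetermined\<close>

definition misses :: "nat set \<times> bool \<Rightarrow> nat set \<Rightarrow> real" where
  "misses x B = of_bool (snd x \<or> fst x \<inter> B = {})"

definition hits :: "nat set \<times> bool \<Rightarrow> nat \<Rightarrow> real" where
  "hits x i = of_bool (\<not> snd x \<and> i \<in> fst x)"

lemma misses_eq_prod_singletons: "finite B \<Longrightarrow> misses x B = (\<Prod>b\<in>B. misses x {b})"
  by (induction B rule: finite_induct) (auto simp: misses_def)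

lemma misses_inclusion_exclusion:
  fixes f :: "'a \<Rightarrow> nat set \<times> bool"
  assumes A: "finite A" and K: "finite K" "i \<notin> K"
  shows "(\<Prod>j\<in>A. misses (f j) {i}) * (1 - (\<Prod>k\<in>K. 1 - (\<Prod>j\<in>A. misses (f j) {k})))
    = (\<Prod>j\<in>A. misses (f j) {i}) - (\<Sum>X\<in>Pow K. (-1) ^ card X * (\<Prod>j\<in>A. misses (f j) (insert i X)))"
proof -
  have joint: "(\<Prod>j\<in>A. misses (f j) {i}) * (\<Prod>k\<in>X. \<Prod>j\<in>A. misses (f j) {k})
      = (\<Prod>j\<in>A. misses (f j) (insert i X))" if "X \<in> Pow K" for X
  proof -
    have X: "finite X" "i \<notin> X" using that K finite_subset by auto
    have "(\<Prod>j\<in>A. misses (f j) {i}) * (\<Prod>k\<in>X. \<Prod>j\<in>A. misses (f j) {k})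
        = (\<Prod>j\<in>A. misses (f j) {i} * (\<Prod>k\<in>X. misses (f j) {k}))"
      by (simp add: prod.distrib prod.swap[of _ X])
    also have "\<dots> = (\<Prod>j\<in>A. misses (f j) (insert i X))"
      using X by (intro prod.cong refl) (simp add: misses_eq_prod_singletons[of "insert i X"] misses_eq_prod_singletons[of X])
    finally show ?thesis .
  qed
  have "(\<Prod>j\<in>A. misses (f j) {i}) * (1 - (\<Prod>k\<in>K. 1 - (\<Prod>j\<in>A. misses (f j) {k})))
    = (\<Prod>j\<in>A. misses (f j) {i}) * (1 - (\<Sum>X\<in>Pow K. (-1) ^ card X * (\<Prod>k\<in>X. \<Prod>j\<in>A. misses (f j) {k})))"
    by (simp only: prod_one_minus_eq_sum_Pow[OF K(1)])
  also have "\<dots> = (\<Prod>j\<in>A. misses (f j) {i}) - (\<Sum>X\<in>Pow K. (-1) ^ card X *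
      ((\<Prod>j\<in>A. misses (f j) {i}) * (\<Prod>k\<in>X. \<Prod>j\<in>A. misses (f j) {k})))"
    by (simp add: right_diff_distrib sum_distrib_left mult_ac)
  also have "\<dots> = (\<Prod>j\<in>A. misses (f j) {i}) - (\<Sum>X\<in>Pow K. (-1) ^ card X * (\<Prod>j\<in>A. misses (f j) (insert i X)))"
    using joint by (intro arg_cong2[where f = "(-)"] sum.cong refl) simp_all
  finally show ?thesis .
qed

text \<open>The two situations of the header in which bit i is stuck, written as a polynomial in
  per-generator indicators so that its expectation factorises over the independent generators.\<close>

definition stuck_witness :: "nat \<Rightarrow> nat \<Rightarrow> (nat \<Rightarrow> nat set \<times> bool) \<Rightarrow> real" where
  "stuck_witness n i G = (\<Prod>j<n. misses (G j) {i}) +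
     (\<Sum>j<n. hits (G j) i * (\<Prod>j'\<in>{..<n}-{j}. misses (G j') {i}) *
        (1 - (\<Prod>k\<in>fst (G j) - {i}. 1 - (\<Prod>j'\<in>{..<n}-{j}. misses (G j') {k}))))"

lemma not_recovered_if_unhit:
  assumes "\<forall>j<n. snd (G j) \<or> i \<notin> fst (G j)"
  shows "i \<notin> recovered G n"
  using assms by (auto elim: recovered.cases)

lemma not_recovered_if_lone_check:
  assumes j0: "j0 < n" "\<not> snd (G j0)" "i \<in> fst (G j0)" "k \<in> fst (G j0)" "k \<noteq> i"
    and others: "\<forall>j<n. j \<noteq> j0 \<longrightarrow> snd (G j) \<or> i \<notin> fst (G j) \<and> k \<notin> fst (G j)"
  shows "i \<notin> recovered G n"
proof -
  \<comment> \<open>Only j0 could reveal i or k, and it needs the other one first.\<close>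
  have "x \<noteq> i \<and> x \<noteq> k" if "x \<in> recovered G n" for x
    using that
  proof (induction rule: recovered.induct)
    case (peel j x)
    then show ?case
      using j0 others by (metis (no_types, lifting))
  qed
  then show ?thesis by blast
qed

lemma prod_misses_singleton:
  assumes "finite A"
  shows "(\<Prod>j\<in>A. misses (G j) {k}) = of_bool (\<forall>j\<in>A. snd (G j) \<or> k \<notin> fst (G j))"
proof -
  have "(\<Prod>j\<in>A. misses (G j) {k}) = (\<Prod>j\<in>A. of_bool (snd (G j) \<or> k \<notin> fst (G j)))"
    unfolding misses_def by (intro prod.cong refl arg_cong[where f = of_bool]) auto
  also have "\<dots> = of_bool (\<forall>j\<in>A. snd (G j) \<or> k \<notin> fst (G j))"
    by (rule prod_of_bool_eq[OF assms])
  finally show ?thesis .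
qed

lemma stuck_summand_le:
  "hits x i * of_bool P * (1 - (\<Prod>k\<in>K. 1 - of_bool (Q k))) \<le> of_bool (\<not> snd x \<and> i \<in> fst x \<and> P \<and> (\<exists>k\<in>K. Q k))"
proof (cases "finite K")
  case True
  have "(\<Prod>k\<in>K. 1 - of_bool (Q k) :: real) = (\<Prod>k\<in>K. of_bool (\<not> Q k))"
    by (simp only: of_bool_not_iff)
  also have "\<dots> = of_bool (\<forall>k\<in>K. \<not> Q k)"
    by (rule prod_of_bool_eq[OF True])
  finally show ?thesis by (simp add: hits_def)
qed (simp add: hits_def)

lemma stuck_witness_le: "stuck_witness n i G \<le> of_bool (i \<notin> recovered G n)"
proof -
  define lone where "lone j \<longleftrightarrow> \<not> snd (G j) \<and> i \<in> fst (G j) \<and>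
      (\<forall>j'\<in>{..<n}-{j}. snd (G j') \<or> i \<notin> fst (G j')) \<and>
      (\<exists>k\<in>fst (G j) - {i}. \<forall>j'\<in>{..<n}-{j}. snd (G j') \<or> k \<notin> fst (G j'))" for j
  have "stuck_witness n i G = of_bool (\<forall>j\<in>{..<n}. snd (G j) \<or> i \<notin> fst (G j)) +
     (\<Sum>j<n. hits (G j) i * of_bool (\<forall>j'\<in>{..<n}-{j}. snd (G j') \<or> i \<notin> fst (G j')) *
        (1 - (\<Prod>k\<in>fst (G j) - {i}. 1 - of_bool (\<forall>j'\<in>{..<n}-{j}. snd (G j') \<or> k \<notin> fst (G j')))))"
    unfolding stuck_witness_def by (simp only: prod_misses_singleton finite_lessThan finite_Diff)
  also have "\<dots> \<le> of_bool (\<forall>j\<in>{..<n}. snd (G j) \<or> i \<notin> fst (G j)) + (\<Sum>j<n. of_bool (lone j))"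
    unfolding lone_def by (intro add_left_mono sum_mono stuck_summand_le)
  also have "\<dots> \<le> of_bool (i \<notin> recovered G n)"
  proof (cases "\<exists>j0<n. lone j0")
    case True
    then obtain j0 k where j0: "j0 < n" "\<not> snd (G j0)" "i \<in> fst (G j0)" "k \<in> fst (G j0)" "k \<noteq> i"
      and others: "\<forall>j'\<in>{..<n}-{j0}. (snd (G j') \<or> i \<notin> fst (G j')) \<and> (snd (G j') \<or> k \<notin> fst (G j'))"
      unfolding lone_def by blast
    have "{..<n} \<inter> {j. lone j} = {j0}"
      using j0 others by (auto simp: lone_def)
    then have "(\<Sum>j<n. of_bool (lone j) :: real) = 1" by simp
    moreover have "i \<notin> recovered G n"
      by (rule not_recovered_if_lone_check[of j0 n G i k]) (use j0 others in auto)
    ultimately show ?thesis using j0 by auto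
  next
    case False
    then show ?thesis using not_recovered_if_unhit[of n G i] by auto
  qed
  finally show ?thesis .
qed

section \<open>Expected value of the certificate\<close>

definition hit_prob :: "nat pmf \<Rightarrow> nat \<Rightarrow> real \<Rightarrow> nat \<Rightarrow> nat \<Rightarrow> real" where
  "hit_prob R dmax eps m b = (1 - eps) * (\<Sum>d=1..dmax. pmf R d * meet_prob m b (min d m))"

text \<open>For a generator of degree c containing bit i: the probability that N further generators
  all miss i while some other neighbour of it is missed by all of them (inclusion-exclusion).\<close>

definition isolated_check_prob :: "nat pmf \<Rightarrow> nat \<Rightarrow> real \<Rightarrow> nat \<Rightarrow> nat \<Rightarrow> nat \<Rightarrow> real" where
  "isolated_check_prob R dmax eps m N c = (1 - hit_prob R dmax eps m 1) ^ N -
     (\<Sum>l\<le>c - 1. real (c - 1 choose l) * (-1) ^ l * (1 - hit_prob R dmax eps m (1 + l)) ^ N)"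

definition stuck_witness_prob :: "nat pmf \<Rightarrow> nat \<Rightarrow> real \<Rightarrow> nat \<Rightarrow> nat \<Rightarrow> real" where
  "stuck_witness_prob R dmax eps m n = (1 - hit_prob R dmax eps m 1) ^ n +
     real n * ((1 - eps) * (\<Sum>d=1..dmax. pmf R d * meet_prob m 1 (min d m) *
                                         isolated_check_prob R dmax eps m (n - 1) (min d m)))"

context
  fixes R :: "nat pmf" and dmax :: nat and eps :: real and m :: nat
  assumes R: "set_pmf R \<subseteq> {1..dmax}" and eps: "0 \<le> eps" "eps \<le> 1"
begin

abbreviation "gen \<equiv> ldgm_gen R eps m"

lemma expectation_misses:
  assumes B: "B \<subseteq> {..<m}"
  shows "measure_pmf.expectation gen (\<lambda>x. misses x B) = 1 - hit_prob R dmax eps m (card B)"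
proof -
  have "measure_pmf.expectation gen (\<lambda>x. misses x B) =
     (\<Sum>d=1..dmax. pmf R d * (1 - (1 - eps) * meet_prob m (card B) (min d m)))"
    unfolding expectation_ldgm_gen[OF R eps]
  proof (intro sum.cong refl arg_cong2[where f = "(*)"])
    fix d
    have "(\<Sum>S\<in>ksubsets m (min d m). eps * misses (S, True) B + (1 - eps) * misses (S, False) B)
        = eps * real (m choose min d m) + (1 - eps) * (\<Sum>S\<in>ksubsets m (min d m). of_bool (S \<inter> B = {}))"
      by (simp add: misses_def sum.distrib sum_distrib_left card_ksubsets)
    also have "\<dots> = (1 - (1 - eps) * meet_prob m (card B) (min d m)) * real (m choose min d m)"
      by (simp add: sum_ksubsets_avoiding[OF B] algebra_simps)
    finally show "(\<Sum>S\<in>ksubsets m (min d m). eps * misses (S, True) B + (1 - eps) * misses (S, False) B)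
        / real (m choose min d m) = 1 - (1 - eps) * meet_prob m (card B) (min d m)"
      by simp
  qed
  also have "\<dots> = (\<Sum>d=1..dmax. pmf R d) - (1 - eps) * (\<Sum>d=1..dmax. pmf R d * meet_prob m (card B) (min d m))"
    by (simp add: sum_subtractf sum_distrib_left right_diff_distrib mult_ac)
  also have "\<dots> = 1 - hit_prob R dmax eps m (card B)"
    using sum_pmf_eq_1[of "{1..dmax}" R] R by (simp add: hit_prob_def)
  finally show ?thesis .
qed

lemma expectation_hits_mult:
  assumes i: "i < m"
  shows "measure_pmf.expectation gen (\<lambda>x. hits x i * g (card (fst x))) =
     (1 - eps) * (\<Sum>d=1..dmax. pmf R d * meet_prob m 1 (min d m) * g (min d m))"
proof -
  have "measure_pmf.expectation gen (\<lambda>x. hits x i * g (card (fst x))) =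
     (\<Sum>d=1..dmax. pmf R d * ((1 - eps) * meet_prob m 1 (min d m) * g (min d m)))"
    unfolding expectation_ldgm_gen[OF R eps]
  proof (intro sum.cong refl arg_cong2[where f = "(*)"])
    fix d
    define c where "c = min d m"
    have avoiding: "(\<Sum>S\<in>ksubsets m c. of_bool (S \<inter> {i} = {}) :: real) = (1 - meet_prob m 1 c) * real (m choose c)"
      using sum_ksubsets_avoiding[of "{i}" m c] i by (simp add: c_def)
    have "(\<Sum>S\<in>ksubsets m c. eps * (hits (S, True) i * g (card S)) + (1 - eps) * (hits (S, False) i * g (card S)))
        = (1 - eps) * g c * (\<Sum>S\<in>ksubsets m c. 1 - of_bool (S \<inter> {i} = {}))"
      unfolding sum_distrib_left by (intro sum.cong refl) (auto simp: hits_def ksubsets_def)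
    also have "\<dots> = (1 - eps) * g c * (meet_prob m 1 c * real (m choose c))"
      by (simp only: sum_subtractf avoiding) (simp add: card_ksubsets algebra_simps)
    finally show "(\<Sum>S\<in>ksubsets m (min d m). eps * (hits (S, True) i * g (card (fst (S, True))))
          + (1 - eps) * (hits (S, False) i * g (card (fst (S, False))))) / real (m choose min d m)
       = (1 - eps) * meet_prob m 1 (min d m) * g (min d m)"
      by (simp add: c_def)
  qed
  also have "\<dots> = (1 - eps) * (\<Sum>d=1..dmax. pmf R d * meet_prob m 1 (min d m) * g (min d m))"
    by (simp add: sum_distrib_left mult_ac)
  finally show ?thesis .
qed

lemma expectation_prod_misses:
  assumes A: "finite A" and B: "B \<subseteq> {..<m}"
  shows "measure_pmf.expectation (Pi_pmf A dflt (\<lambda>_. gen)) (\<lambda>f. \<Prod>j\<in>A. misses (f j) B)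
     = (1 - hit_prob R dmax eps m (card B)) ^ card A"
proof -
  have "measure_pmf.expectation (Pi_pmf A dflt (\<lambda>_. gen)) (\<lambda>f. \<Prod>j\<in>A. misses (f j) B)
     = (\<Prod>j\<in>A. measure_pmf.expectation gen (\<lambda>x. misses x B))"
    by (rule expectation_prod_Pi_pmf)
       (auto simp: A finite_set_pmf_ldgm_gen integrable_measure_pmf_finite misses_def)
  then show ?thesis by (simp add: expectation_misses[OF B])
qed

lemma expectation_isolated_check:
  assumes A: "finite A" and S: "S \<subseteq> {..<m}" "i \<in> S"
  shows "measure_pmf.expectation (Pi_pmf A dflt (\<lambda>_. gen))
      (\<lambda>f. (\<Prod>j\<in>A. misses (f j) {i}) * (1 - (\<Prod>k\<in>S - {i}. 1 - (\<Prod>j\<in>A. misses (f j) {k}))))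
    = isolated_check_prob R dmax eps m (card A) (card S)"
proof -
  define P where "P = Pi_pmf A dflt (\<lambda>_. gen)"
  define K where "K = S - {i}"
  have K: "finite K" "i \<notin> K" "card K = card S - 1"
    using S finite_subset by (auto simp: K_def)
  have int: "integrable P h" for h :: "_ \<Rightarrow> real"
    unfolding P_def
    by (intro integrable_measure_pmf_finite) (simp add: set_Pi_pmf A finite_PiE_dflt finite_set_pmf_ldgm_gen)
  have miss_all: "measure_pmf.expectation P (\<lambda>f. \<Prod>j\<in>A. misses (f j) (insert i X))
      = (1 - hit_prob R dmax eps m (1 + card X)) ^ card A" if "X \<in> Pow K" for X
  proof -
    have "X \<subseteq> K" using that by simp
    then have "finite X" "i \<notin> X" "insert i X \<subseteq> {..<m}"
      using finite_subset[of X K] K S by (auto simp: K_def)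
    then show ?thesis unfolding P_def by (simp add: expectation_prod_misses[OF A])
  qed
  have "measure_pmf.expectation P
      (\<lambda>f. (\<Prod>j\<in>A. misses (f j) {i}) * (1 - (\<Prod>k\<in>K. 1 - (\<Prod>j\<in>A. misses (f j) {k}))))
    = measure_pmf.expectation P (\<lambda>f. \<Prod>j\<in>A. misses (f j) {i}) -
      (\<Sum>X\<in>Pow K. (-1) ^ card X * measure_pmf.expectation P (\<lambda>f. \<Prod>j\<in>A. misses (f j) (insert i X)))"
    by (simp add: misses_inclusion_exclusion[OF A K(1,2)] Bochner_Integration.integral_diff[OF int int]
        Bochner_Integration.integral_sum[OF int])
  also have "\<dots> = (1 - hit_prob R dmax eps m 1) ^ card A -
      (\<Sum>X\<in>Pow K. (-1) ^ card X * (1 - hit_prob R dmax eps m (1 + card X)) ^ card A)"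
    using S miss_all by (simp add: P_def expectation_prod_misses[OF A])
  also have "\<dots> = isolated_check_prob R dmax eps m (card A) (card S)"
    using sum_Pow_card[OF K(1), of "\<lambda>l. (-1) ^ l * (1 - hit_prob R dmax eps m (1 + l)) ^ card A"] K(3)
    by (simp add: isolated_check_prob_def mult_ac)
  finally show ?thesis by (simp add: P_def K_def)
qed

lemma expectation_stuck_summand:
  assumes j: "j < n" and i: "i < m"
  shows "measure_pmf.expectation (ldgm_graph R eps m n)
     (\<lambda>G. hits (G j) i * (\<Prod>j'\<in>{..<n}-{j}. misses (G j') {i}) *
        (1 - (\<Prod>k\<in>fst (G j) - {i}. 1 - (\<Prod>j'\<in>{..<n}-{j}. misses (G j') {k}))))
   = (1 - eps) * (\<Sum>d=1..dmax. pmf R d * meet_prob m 1 (min d m) *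
                               isolated_check_prob R dmax eps m (n - 1) (min d m))"
proof -
  define A where "A = {..<n} - {j}"
  have A: "finite A" "j \<notin> A" "card A = n - 1" and nA: "{..<n} = insert j A"
    using j by (auto simp: A_def)
  define P where "P = Pi_pmf A ({}, True) (\<lambda>_. gen)"
  have finP: "finite (set_pmf P)"
    by (simp add: P_def set_Pi_pmf A finite_PiE_dflt finite_set_pmf_ldgm_gen)
  define T where "T G = hits (G j) i * ((\<Prod>j'\<in>A. misses (G j') {i}) *
        (1 - (\<Prod>k\<in>fst (G j) - {i}. 1 - (\<Prod>j'\<in>A. misses (G j') {k}))))" for G :: "nat \<Rightarrow> nat set \<times> bool"
  have "ldgm_graph R eps m n = map_pmf (\<lambda>(y, f). f(j := y)) (pair_pmf gen P)"
    unfolding ldgm_graph_def P_def nA by (rule Pi_pmf_insert) (use A in auto)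
  then have "measure_pmf.expectation (ldgm_graph R eps m n) T
      = measure_pmf.expectation gen (\<lambda>y. measure_pmf.expectation P (\<lambda>f. T (f(j := y))))"
    by (simp add: case_prod_unfold expectation_pair_pmf_finite[OF finite_set_pmf_ldgm_gen finP])
  also have "\<dots> = measure_pmf.expectation gen (\<lambda>y. hits y i * isolated_check_prob R dmax eps m (n - 1) (card (fst y)))"
  proof (intro integral_cong_AE AE_pmfI)
    fix y assume "y \<in> set_pmf gen"
    then have y: "fst y \<subseteq> {..<m}" by (rule set_pmf_ldgm_gen)
    have "(\<Prod>j'\<in>A. misses ((f(j := y)) j') B) = (\<Prod>j'\<in>A. misses (f j') B)" for f B
      using A(2) by (intro prod.cong) auto
    then have "T (f(j := y)) = hits y i * ((\<Prod>j'\<in>A. misses (f j') {i}) *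
        (1 - (\<Prod>k\<in>fst y - {i}. 1 - (\<Prod>j'\<in>A. misses (f j') {k}))))" for f
      by (simp add: T_def)
    then show "measure_pmf.expectation P (\<lambda>f. T (f(j := y)))
        = hits y i * isolated_check_prob R dmax eps m (n - 1) (card (fst y))"
      using expectation_isolated_check[OF A(1) y, of i] A(3)
      by (cases "i \<in> fst y") (simp_all add: P_def hits_def)
  qed simp_all
  also have "\<dots> = (1 - eps) * (\<Sum>d=1..dmax. pmf R d * meet_prob m 1 (min d m) *
                               isolated_check_prob R dmax eps m (n - 1) (min d m))"
    by (rule expectation_hits_mult[OF i])
  finally show ?thesis by (simp add: T_def[abs_def] A_def mult.assoc)
qed

lemma expectation_stuck_witness:
  assumes i: "i < m"
  shows "measure_pmf.expectation (ldgm_graph R eps m n) (stuck_witness n i) = stuck_witness_prob R dmax eps m n"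
proof -
  have int: "integrable (ldgm_graph R eps m n) h" for h :: "_ \<Rightarrow> real"
    by (rule integrable_measure_pmf_finite[OF finite_set_pmf_ldgm_graph])
  have "measure_pmf.expectation (ldgm_graph R eps m n) (\<lambda>G. \<Prod>j<n. misses (G j) {i})
      = (1 - hit_prob R dmax eps m 1) ^ n"
    using expectation_prod_misses[of "{..<n}" "{i}"] i by (simp add: ldgm_graph_def)
  then show ?thesis
    unfolding stuck_witness_def stuck_witness_prob_def
    by (simp add: Bochner_Integration.integral_add[OF int int] Bochner_Integration.integral_sum[OF int]
        expectation_stuck_summand i)
qed

lemma stuck_witness_prob_le_bit_error_prob:
  assumes m: "0 < m"
  shows "1/2 * stuck_witness_prob R dmax eps m n \<le> bit_error_prob R eps m n"
proof -
  have "1/2 * stuck_witness_prob R dmax eps m n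
      = 1 / real m * (\<Sum>i<m. 1/2 * measure_pmf.expectation (ldgm_graph R eps m n) (stuck_witness n i))"
    using m by (simp add: expectation_stuck_witness)
  also have "\<dots> \<le> 1 / real m * (\<Sum>i<m. 1/2 *
      measure_pmf.expectation (ldgm_graph R eps m n) (\<lambda>G. of_bool (i \<notin> recovered G n)))"
    by (intro mult_left_mono sum_mono Bochner_Integration.integral_mono stuck_witness_le
        integrable_measure_pmf_finite finite_set_pmf_ldgm_graph) simp_all
  also have "\<dots> = bit_error_prob R eps m n"
    unfolding bit_error_prob_def prob_pair_fair_coin[OF finite_set_pmf_ldgm_graph] ..
  finally show ?thesis .
qed

end

section \<open>Asymptotics\<close>

lemma exp_neg_div_one_minus_le:
  fixes q :: real
  assumes "q < 1"
  shows "exp (- (q / (1 - q))) \<le> 1 - q"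
proof -
  have "1 / (1 - q) \<le> exp (q / (1 - q))"
    using exp_ge_add_one_self[of "q / (1 - q)"] assms by (simp add: field_simps)
  then have "inverse (exp (q / (1 - q))) \<le> inverse (1 / (1 - q))"
    using assms by (intro le_imp_inverse_le) auto
  then show ?thesis using assms by (simp add: exp_minus)
qed

lemma tendsto_one_minus_power:
  fixes q :: "nat \<Rightarrow> real" and N :: "nat \<Rightarrow> nat"
  assumes q: "q \<longlonglongrightarrow> 0" and Nq: "(\<lambda>k. real (N k) * q k) \<longlonglongrightarrow> c"
  shows "(\<lambda>k. (1 - q k) ^ N k) \<longlonglongrightarrow> exp (- c)"
proof (rule tendsto_sandwich)
  have small: "eventually (\<lambda>k. q k < 1) sequentially"
    using q by (rule order_tendstoD) simp
  show "eventually (\<lambda>k. exp (- (real (N k) * q k / (1 - q k))) \<le> (1 - q k) ^ N k) sequentially"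
    using small
  proof eventually_elim
    case (elim k)
    have "exp (- (real (N k) * q k / (1 - q k))) = exp (- (q k / (1 - q k))) ^ N k"
      by (simp add: exp_of_nat_mult[symmetric])
    also have "\<dots> \<le> (1 - q k) ^ N k"
      by (rule power_mono[OF exp_neg_div_one_minus_le[OF elim]]) simp
    finally show ?case .
  qed
  show "eventually (\<lambda>k. (1 - q k) ^ N k \<le> exp (- (real (N k) * q k))) sequentially"
    using small
  proof eventually_elim
    case (elim k)
    have "(1 - q k) ^ N k \<le> exp (- q k) ^ N k"
      by (rule power_mono) (use exp_ge_add_one_self[of "- q k"] elim in auto)
    then show ?case by (simp add: exp_of_nat_mult[symmetric])
  qed
  have "(\<lambda>k. real (N k) * q k / (1 - q k)) \<longlonglongrightarrow> c / (1 - 0)"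
    by (intro tendsto_intros Nq q) simp
  then show "(\<lambda>k. exp (- (real (N k) * q k / (1 - q k)))) \<longlonglongrightarrow> exp (- c)"
    by (auto intro!: tendsto_intros)
  show "(\<lambda>k. exp (- (real (N k) * q k))) \<longlonglongrightarrow> exp (- c)"
    by (intro tendsto_intros Nq)
qed

lemma tendsto_mult_via_ratio:
  fixes x y z :: "nat \<Rightarrow> real"
  assumes "(\<lambda>k. x k / y k) \<longlonglongrightarrow> a" "(\<lambda>k. y k * z k) \<longlonglongrightarrow> b"
    and "eventually (\<lambda>k. y k \<noteq> 0) sequentially"
  shows "(\<lambda>k. x k * z k) \<longlonglongrightarrow> a * b"
proof -
  have "(\<lambda>k. x k / y k * (y k * z k)) \<longlonglongrightarrow> a * b"
    by (rule tendsto_mult[OF assms(1,2)])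
  moreover have "eventually (\<lambda>k. x k / y k * (y k * z k) = x k * z k) sequentially"
    using assms(3) by eventually_elim simp
  ultimately show ?thesis by (rule Lim_transform_eventually)
qed

lemma tendsto_scaled_one_minus_prod:
  fixes b :: real
  shows "(\<lambda>m::nat. \<Prod>t<d. 1 - b / (real m - real t)) \<longlonglongrightarrow> 1 \<and>
         (\<lambda>m::nat. real m * (1 - (\<Prod>t<d. 1 - b / (real m - real t)))) \<longlonglongrightarrow> b * real d"
proof (induction d)
  case (Suc d)
  define P where "P m = (\<Prod>t<d. 1 - b / (real m - real t))" for m :: nat
  have P1: "P \<longlonglongrightarrow> 1" and P2: "(\<lambda>m. real m * (1 - P m)) \<longlonglongrightarrow> b * real d"
    using Suc by (simp_all add: P_def[abs_def])
  have x0: "(\<lambda>m::nat. b / (real m - real d)) \<longlonglongrightarrow> 0" by real_asymp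
  have x1: "(\<lambda>m::nat. real m * (b / (real m - real d))) \<longlonglongrightarrow> b" by real_asymp
  have step: "real m * (1 - P m * (1 - b / (real m - real d))) =
      real m * (1 - P m) + P m * (real m * (b / (real m - real d)))" for m
    by (simp add: algebra_simps)
  have "(\<lambda>m. P m * (1 - b / (real m - real d))) \<longlonglongrightarrow> 1 * (1 - 0)"
    by (intro tendsto_intros P1 x0)
  moreover have "(\<lambda>m. real m * (1 - P m) + P m * (real m * (b / (real m - real d)))) \<longlonglongrightarrow> b * real d + 1 * b"
    by (intro tendsto_intros P1 P2 x1)
  ultimately show ?case
    by (simp add: P_def[symmetric] step algebra_simps)
qed simp

lemma binomial_ratio_eq_prod:
  assumes "b + d \<le> m"
  shows "real ((m - b) choose d) / real (m choose d) = (\<Prod>t<d. 1 - real b / (real m - real t))"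
proof -
  have "real ((m - b) choose d) / real (m choose d) = (\<Prod>t<d. real (m - b) - real t) / (\<Prod>t<d. real m - real t)"
    by (simp add: binomial_gbinomial gbinomial_prod_rev atLeast0LessThan)
  also have "\<dots> = (\<Prod>t<d. (real (m - b) - real t) / (real m - real t))"
    by (rule prod_dividef[symmetric])
  also have "\<dots> = (\<Prod>t<d. 1 - real b / (real m - real t))"
    using assms by (intro prod.cong refl) (auto simp: field_simps of_nat_diff)
  finally show ?thesis .
qed

lemma meet_prob_asymp: "(\<lambda>m. real m * meet_prob m b d) \<longlonglongrightarrow> real b * real d"
proof -
  have "(\<lambda>m::nat. real m * (1 - (\<Prod>t<d. 1 - real b / (real m - real t)))) \<longlonglongrightarrow> real b * real d"
    using tendsto_scaled_one_minus_prod[where b = "real b" and d = d] by simp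
  moreover have "eventually (\<lambda>m. real m * (1 - (\<Prod>t<d. 1 - real b / (real m - real t))) = real m * meet_prob m b d)
      sequentially"
    using eventually_ge_at_top[of "b + d"] by eventually_elim (simp add: meet_prob_def binomial_ratio_eq_prod)
  ultimately show ?thesis by (rule Lim_transform_eventually)
qed

lemma hit_prob_eq_of_ge:
  "dmax \<le> m \<Longrightarrow> hit_prob R dmax eps m b = (1 - eps) * (\<Sum>d=1..dmax. pmf R d * meet_prob m b d)"
  unfolding hit_prob_def by (intro arg_cong2[where f = "(*)"] sum.cong refl) (simp add: min_absorb1)

lemma hit_prob_asymp:
  "(\<lambda>m. real m * hit_prob R dmax eps m b) \<longlonglongrightarrow> (1 - eps) * real b * Rder dmax R 1"
proof -
  have "(\<lambda>m. (1 - eps) * (\<Sum>d=1..dmax. pmf R d * (real m * meet_prob m b d)))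
      \<longlonglongrightarrow> (1 - eps) * (\<Sum>d=1..dmax. pmf R d * (real b * real d))"
    by (intro tendsto_intros meet_prob_asymp)
  also have "(1 - eps) * (\<Sum>d=1..dmax. pmf R d * (real b * real d)) = (1 - eps) * real b * Rder dmax R 1"
    by (simp add: Rder_def sum_distrib_left mult_ac)
  finally have lim: "(\<lambda>m. (1 - eps) * (\<Sum>d=1..dmax. pmf R d * (real m * meet_prob m b d)))
      \<longlonglongrightarrow> (1 - eps) * real b * Rder dmax R 1" .
  have "eventually (\<lambda>m. (1 - eps) * (\<Sum>d=1..dmax. pmf R d * (real m * meet_prob m b d))
      = real m * hit_prob R dmax eps m b) sequentially"
    using eventually_ge_at_top[of dmax]
    by eventually_elim (simp add: hit_prob_eq_of_ge sum_distrib_left mult_ac)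
  with lim show ?thesis by (rule Lim_transform_eventually)
qed

lemma one_le_Rder_one:
  assumes "set_pmf R \<subseteq> {1..dmax}"
  shows "1 \<le> Rder dmax R 1"
proof -
  have "(\<Sum>d=1..dmax. pmf R d) \<le> (\<Sum>d=1..dmax. real d * pmf R d)"
  proof (rule sum_mono)
    fix d assume "d \<in> {1..dmax}"
    then show "pmf R d \<le> real d * pmf R d"
      using mult_right_mono[of 1 "real d" "pmf R d"] by simp
  qed
  then show ?thesis using sum_pmf_eq_1[of "{1..dmax}" R] assms by (simp add: Rder_def)
qed

lemma lam_power: "lam dmax R r eps ^ b = exp (- ((1 - eps) * real b * Rder dmax R 1 / r))"
proof -
  have "real b * (Rder dmax R 1 / r * (eps - 1)) = - ((1 - eps) * real b * Rder dmax R 1 / r)"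
    by (simp add: algebra_simps minus_divide_left)
  then show ?thesis by (simp add: lam_def lavg_def exp_of_nat_mult[symmetric])
qed

context
  fixes R :: "nat pmf" and dmax :: nat and r eps :: real and ms ns :: "nat \<Rightarrow> nat"
  assumes r: "r > 0" and ms: "filterlim ms at_top sequentially"
    and ratio: "(\<lambda>k. real (ns k) / real (ms k)) \<longlonglongrightarrow> 1 / r"
begin

lemma eventually_ms_nonzero: "eventually (\<lambda>k. real (ms k) \<noteq> 0) sequentially"
proof -
  have "eventually (\<lambda>k. 1 \<le> ms k) sequentially"
    using ms by (simp add: filterlim_at_top)
  then show ?thesis by (rule eventually_mono) simp
qed

lemma eventually_ns_ge: "eventually (\<lambda>k. c \<le> ns k) sequentially"
proof -
  have lim: "filterlim (\<lambda>k. real (ns k) / real (ms k) * real (ms k)) at_top sequentially"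
    using r by (intro filterlim_tendsto_pos_mult_at_top[OF ratio] filterlim_compose[OF filterlim_real_sequentially ms])
      simp_all
  have "eventually (\<lambda>k. real (ns k) / real (ms k) * real (ms k) = real (ns k)) sequentially"
    using eventually_ms_nonzero by (rule eventually_mono) simp
  then have "filterlim (\<lambda>k. real (ns k) / real (ms k) * real (ms k)) at_top sequentially
      = filterlim (\<lambda>k. real (ns k)) at_top sequentially"
    by (rule filterlim_cong[OF refl refl])
  with lim have "filterlim (\<lambda>k. real (ns k)) at_top sequentially" by (rule iffD1[rotated])
  then have "eventually (\<lambda>k. real c \<le> real (ns k)) sequentially"
    unfolding filterlim_at_top by blast
  then show ?thesis by (rule eventually_mono) simp
qed

lemma scaled_hit_prob_tendsto:
  "(\<lambda>k. real (ns k) * hit_prob R dmax eps (ms k) b) \<longlonglongrightarrow> (1 - eps) * real b * Rder dmax R 1 / r"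
  using tendsto_mult_via_ratio[OF ratio filterlim_compose[OF hit_prob_asymp ms] eventually_ms_nonzero] by simp

lemma hit_prob_tendsto_zero: "(\<lambda>k. hit_prob R dmax eps (ms k) b) \<longlonglongrightarrow> 0"
proof -
  have "(\<lambda>k. 1 / real (ms k)) \<longlonglongrightarrow> 0"
    by (rule filterlim_compose[OF lim_1_over_n ms])
  from tendsto_mult_via_ratio[OF this filterlim_compose[OF hit_prob_asymp ms] eventually_ms_nonzero]
  show ?thesis by simp
qed

lemma power_miss_tendsto:
  "(\<lambda>k. (1 - hit_prob R dmax eps (ms k) b) ^ (ns k - c)) \<longlonglongrightarrow> lam dmax R r eps ^ b"
proof -
  have "(\<lambda>k. real (ns k) * hit_prob R dmax eps (ms k) b - real c * hit_prob R dmax eps (ms k) b)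
      \<longlonglongrightarrow> (1 - eps) * real b * Rder dmax R 1 / r - real c * 0"
    by (intro tendsto_intros scaled_hit_prob_tendsto hit_prob_tendsto_zero)
  moreover have "eventually (\<lambda>k. real (ns k) * hit_prob R dmax eps (ms k) b - real c * hit_prob R dmax eps (ms k) b
      = real (ns k - c) * hit_prob R dmax eps (ms k) b) sequentially"
    using eventually_ns_ge[of c] by eventually_elim (simp add: of_nat_diff algebra_simps)
  ultimately have "(\<lambda>k. real (ns k - c) * hit_prob R dmax eps (ms k) b) \<longlonglongrightarrow> (1 - eps) * real b * Rder dmax R 1 / r"
    using Lim_transform_eventually by fastforce
  then show ?thesis
    unfolding lam_power by (rule tendsto_one_minus_power[OF hit_prob_tendsto_zero])
qed

lemma isolated_check_prob_tendsto:
  "(\<lambda>k. isolated_check_prob R dmax eps (ms k) (ns k - 1) d)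
     \<longlonglongrightarrow> lam dmax R r eps * (1 - (1 - lam dmax R r eps) ^ (d - 1))"
proof -
  let ?L = "lam dmax R r eps"
  have "(\<lambda>k. isolated_check_prob R dmax eps (ms k) (ns k - 1) d)
     \<longlonglongrightarrow> ?L ^ 1 - (\<Sum>l\<le>d - 1. real (d - 1 choose l) * (-1) ^ l * ?L ^ (1 + l))"
    unfolding isolated_check_prob_def by (intro tendsto_intros power_miss_tendsto)
  also have "?L ^ 1 - (\<Sum>l\<le>d - 1. real (d - 1 choose l) * (-1) ^ l * ?L ^ (1 + l))
      = ?L * (1 - (1 - ?L) ^ (d - 1))"
    by (simp only: alternating_binomial_sum) (simp add: right_diff_distrib)
  finally show ?thesis .
qed

lemma stuck_witness_prob_tendsto:
  "(\<lambda>k. stuck_witness_prob R dmax eps (ms k) (ns k)) \<longlonglongrightarrow>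
     lam dmax R r eps + (1 - eps) * (\<Sum>d=1..dmax. pmf R d * (real d / r) *
                                      (lam dmax R r eps * (1 - (1 - lam dmax R r eps) ^ (d - 1))))"
proof -
  have miss_one: "(\<lambda>k. (1 - hit_prob R dmax eps (ms k) 1) ^ ns k) \<longlonglongrightarrow> lam dmax R r eps"
    using power_miss_tendsto[of 1 0] by simp
  have scaled_meet: "(\<lambda>k. real (ns k) * meet_prob (ms k) 1 d) \<longlonglongrightarrow> real d / r" for d
    using tendsto_mult_via_ratio[OF ratio filterlim_compose[OF meet_prob_asymp[of 1 d] ms] eventually_ms_nonzero]
    by simp
  have "(\<lambda>k. (1 - hit_prob R dmax eps (ms k) 1) ^ ns k + (1 - eps) * (\<Sum>d=1..dmax. pmf R d *
      (real (ns k) * meet_prob (ms k) 1 d) * isolated_check_prob R dmax eps (ms k) (ns k - 1) d))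
    \<longlonglongrightarrow> lam dmax R r eps + (1 - eps) * (\<Sum>d=1..dmax. pmf R d * (real d / r) *
                                      (lam dmax R r eps * (1 - (1 - lam dmax R r eps) ^ (d - 1))))"
    by (intro tendsto_add tendsto_mult tendsto_sum tendsto_const miss_one scaled_meet isolated_check_prob_tendsto)
  moreover have "eventually (\<lambda>k. (1 - hit_prob R dmax eps (ms k) 1) ^ ns k + (1 - eps) * (\<Sum>d=1..dmax. pmf R d *
      (real (ns k) * meet_prob (ms k) 1 d) * isolated_check_prob R dmax eps (ms k) (ns k - 1) d)
      = stuck_witness_prob R dmax eps (ms k) (ns k)) sequentially"
    using ms unfolding filterlim_at_top
  proof (rule eventually_mono[OF spec[of _ dmax]])
    fix k assume "dmax \<le> ms k"
    then have "(\<Sum>d=1..dmax. pmf R d * meet_prob (ms k) 1 (min d (ms k)) *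
        isolated_check_prob R dmax eps (ms k) (ns k - 1) (min d (ms k)))
      = (\<Sum>d=1..dmax. pmf R d * meet_prob (ms k) 1 d * isolated_check_prob R dmax eps (ms k) (ns k - 1) d)"
      by (intro sum.cong refl) (simp add: min_absorb1)
    then show "(1 - hit_prob R dmax eps (ms k) 1) ^ ns k + (1 - eps) * (\<Sum>d=1..dmax. pmf R d *
      (real (ns k) * meet_prob (ms k) 1 d) * isolated_check_prob R dmax eps (ms k) (ns k - 1) d)
      = stuck_witness_prob R dmax eps (ms k) (ns k)"
      unfolding stuck_witness_prob_def by (simp add: sum_distrib_left mult.assoc mult.left_commute)
  qed
  ultimately show ?thesis by (rule Lim_transform_eventually)
qed

end

lemma ldgm_bound_eq_limit:
  assumes R: "set_pmf R \<subseteq> {1..dmax}" and r: "r > 0"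
  shows "lam dmax R r eps + (1 - eps) * (\<Sum>d=1..dmax. pmf R d * (real d / r) *
           (lam dmax R r eps * (1 - (1 - lam dmax R r eps) ^ (d - 1))))
    = 2 * ldgm_bound dmax R r eps"
proof -
  define L where "L = lam dmax R r eps"
  define D where "D = Rder dmax R 1"
  have D: "D \<ge> 1" unfolding D_def by (rule one_le_Rder_one[OF R])
  have "(\<Sum>d=1..dmax. pmf R d * (real d / r) * (L * (1 - (1 - L) ^ (d - 1))))
      = L / r * ((\<Sum>d=1..dmax. real d * pmf R d) - (\<Sum>d=1..dmax. real d * pmf R d * (1 - L) ^ (d - 1)))"
    by (simp add: sum_subtractf[symmetric] sum_distrib_left algebra_simps)
  also have "\<dots> = L / r * (D - Rder dmax R (1 - L))"
    by (simp add: D_def Rder_def)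
  finally have sum: "(\<Sum>d=1..dmax. pmf R d * (real d / r) * (L * (1 - (1 - L) ^ (d - 1))))
      = L / r * (D - Rder dmax R (1 - L))" .
  have "ldgm_bound dmax R r eps = 1/2 * L * (1 + D / r * (1 - eps) * (1 - Rder dmax R (1 - L) / D))"
    unfolding ldgm_bound_def lavg_def L_def D_def ..
  also have "D / r * (1 - eps) * (1 - Rder dmax R (1 - L) / D) = (1 - eps) * (D - Rder dmax R (1 - L)) / r"
    using D r by (simp add: field_simps)
  finally show ?thesis
    unfolding L_def[symmetric] sum using r by (simp add: field_simps)
qed

lemma ldgm_bound_ge_exp:
  assumes R: "set_pmf R \<subseteq> {1..dmax}" and r: "r > 0" and eps: "eps < 1"
  shows "1/2 * exp (- (Rder dmax R 1 * (1 - eps) / r)) \<le> ldgm_bound dmax R r eps"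
proof -
  define D where "D = Rder dmax R 1"
  define L where "L = lam dmax R r eps"
  have D: "D \<ge> 1" unfolding D_def by (rule one_le_Rder_one[OF R])
  have L: "L = exp (- (D * (1 - eps) / r))"
    using r by (simp add: L_def lam_def lavg_def D_def field_simps)
  have L01: "0 < L" "L \<le> 1"
    unfolding L using D r eps by (simp_all add: field_simps)
  have "Rder dmax R (1 - L) \<le> D"
    unfolding D_def Rder_def using L01
    by (intro sum_mono mult_left_mono) (auto intro!: power_le_one)
  then have "0 \<le> lavg dmax R r * (1 - eps) * (1 - Rder dmax R (1 - L) / D)"
    using D r eps by (intro mult_nonneg_nonneg) (simp_all add: lavg_def D_def[symmetric] field_simps)
  then show ?thesis
    using L01 unfolding ldgm_bound_def L_def[symmetric] D_def[symmetric] L by simp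
qed

lemma Rder_one_tendsto_at_top:
  fixes Rs :: "nat \<Rightarrow> nat pmf" and ds :: "nat \<Rightarrow> nat"
  assumes Rs: "\<And>k. set_pmf (Rs k) \<subseteq> {1..ds k}" and r: "r > 0" and eps: "eps < 1"
    and bound: "(\<lambda>k. ldgm_bound (ds k) (Rs k) r eps) \<longlonglongrightarrow> 0"
  shows "filterlim (\<lambda>k. Rder (ds k) (Rs k) 1) at_top sequentially"
  unfolding filterlim_at_top
proof
  fix Z :: real
  have "eventually (\<lambda>k. ldgm_bound (ds k) (Rs k) r eps < 1/2 * exp (- (Z * (1 - eps) / r))) sequentially"
    using bound by (rule order_tendstoD) simp
  then show "eventually (\<lambda>k. Z \<le> Rder (ds k) (Rs k) 1) sequentially"
  proof eventually_elim
    case (elim k)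
    then have "exp (- (Rder (ds k) (Rs k) 1 * (1 - eps) / r)) < exp (- (Z * (1 - eps) / r))"
      using ldgm_bound_ge_exp[OF Rs r eps, of k] by linarith
    then have "Z * (1 - eps) / r < Rder (ds k) (Rs k) 1 * (1 - eps) / r" by simp
    then show ?case
      using r eps by (simp add: divide_less_cancel mult_less_cancel_right)
  qed
qed

theorem mainTheorem2:
  fixes R :: "nat pmf" and dmax :: nat and r eps P :: real
    and ms ns :: "nat \<Rightarrow> nat"
  assumes "set_pmf R \<subseteq> {1..dmax}"
    and "r > 0" and "0 < eps" and "eps < 1"
    and "filterlim ms at_top sequentially"
    and "(\<lambda>k. real (ns k) / real (ms k)) \<longlonglongrightarrow> 1 / r"
    and "(\<lambda>k. bit_error_prob R eps (ms k) (ns k)) \<longlonglongrightarrow> P"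
  shows "ldgm_bound dmax R r eps \<le> P \<and>
    (\<forall>(Rs :: nat \<Rightarrow> nat pmf) (ds :: nat \<Rightarrow> nat).
        (\<forall>k. set_pmf (Rs k) \<subseteq> {1..ds k}) \<longrightarrow>
        (\<lambda>k. ldgm_bound (ds k) (Rs k) r eps) \<longlonglongrightarrow> 0 \<longrightarrow>
        filterlim (\<lambda>k. Rder (ds k) (Rs k) 1) at_top sequentially)"
proof (intro conjI allI impI)
  note R = assms(1) and r = assms(2) and eps = assms(3,4)
  have "(\<lambda>k. stuck_witness_prob R dmax eps (ms k) (ns k)) \<longlonglongrightarrow> 2 * ldgm_bound dmax R r eps"
    using stuck_witness_prob_tendsto[OF r assms(5,6), of R dmax eps] unfolding ldgm_bound_eq_limit[OF R r] .
  from tendsto_mult_left[OF this, of "1/2"]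
  have lim: "(\<lambda>k. 1/2 * stuck_witness_prob R dmax eps (ms k) (ns k)) \<longlonglongrightarrow> ldgm_bound dmax R r eps"
    by simp
  have "eventually (\<lambda>k. 1/2 * stuck_witness_prob R dmax eps (ms k) (ns k)
      \<le> bit_error_prob R eps (ms k) (ns k)) sequentially"
    using eventually_ms_nonzero[OF r assms(5,6)]
    by (rule eventually_mono) (rule stuck_witness_prob_le_bit_error_prob[OF R], use eps in simp_all)
  then show "ldgm_bound dmax R r eps \<le> P"
    by (rule tendsto_le[OF trivial_limit_sequentially assms(7) lim])
next
  fix Rs :: "nat \<Rightarrow> nat pmf" and ds :: "nat \<Rightarrow> nat"
  assume "\<forall>k. set_pmf (Rs k) \<subseteq> {1..ds k}" "(\<lambda>k. ldgm_bound (ds k) (Rs k) r eps) \<longlonglongrightarrow> 0"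
  then show "filterlim (\<lambda>k. Rder (ds k) (Rs k) 1) at_top sequentially"
    using Rder_one_tendsto_at_top assms(2,4) by blast
qed

end
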